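(* Let $H_0,H_1$ be complex Hilbert spaces, $G$ a densely defined closed operator from $H_0$ into $H_1$ and $D$ a densely defined closed operator from $H_1$ into $H_0$ with $-G^*\subset D$. Let $m\in\mathcal L(H_0)$ (not necessarily coercive) and let $a\in\mathcal L(H_1)$ be coercive. Let $\mathring T\in\mathcal L(\mathrm{dom}(\mathring G))$ be defined by $(\mathring Tu,v)_{\mathrm{dom}(\mathring G)}=(aGu,Gv)_{H_1}+(mu,v)_{H_0}$ for all $u,v\in\mathrm{dom}(\mathring G)$, and suppose $\mathrm{ran}(\mathring T)$ is closed in $\mathrm{dom}(\mathring G)$. Then the Dirichlet-to-Neumann graph $\Lambda$ associated with $-DaG+m$ satisfies \[ \mathrm{dom}(\Lambda)=\{u_0\in\mathrm{BD}(G):\big(\Phi(\pi_{\mathrm{BD}(D)}a^*Gv)\big)(u_0)=0\text{ for all }v\in\ker(m^*-Da^*\mathring G)\}, \] where $\Phi\colon\mathrm{BD}(D)\to\mathrm{BD}(G)'$ is given by $(\Phi(q))(u)=(Dq,u)_{H_0}+(q,Gu)_{H_1}$.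
   Context: $\mathring D=-G^*$, $\mathring G=-D^*$. Domains carry graph inner products. $\mathrm{BD}(G)$ (resp. $\mathrm{BD}(D)$) is the orthogonal complement of $\mathrm{dom}(\mathring G)$ in $\mathrm{dom}(G)$ (resp. of $\mathrm{dom}(\mathring D)$ in $\mathrm{dom}(D)$) with induced inner products; $\pi_{\mathrm{BD}(G)},\pi_{\mathrm{BD}(D)}$ the orthogonal projections. $\mathrm{BD}(G)'$ is the space of continuous antilinear functionals on $\mathrm{BD}(G)$. Coercive: $\mathrm{Re}(ax,x)\ge\mu\|x\|^2$ for some $\mu>0$. The Dirichlet-to-Neumann graph is $\Lambda=\{(\pi_{\mathrm{BD}(G)}u,\pi_{\mathrm{BD}(D)}aGu): u\in\mathrm{dom}(G),\ aGu\in\mathrm{dom}(D),\ mu-DaGu=0\}$, $\mathrm{dom}(\Lambda)$ the set of first components. $\ker(m^*-Da^*\mathring G)=\{v\in\mathrm{dom}(\mathring G):a^*\mathring Gv\in\mathrm{dom}(D),\ m^*v=Da^*\mathring Gv\}$. *)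

theory Defs
  imports "HOL-Analysis.Analysis"
begin

class complex_vector = real_vector +
  fixes scaleC :: "complex \<Rightarrow> 'a \<Rightarrow> 'a"
  assumes scaleC_add_right: "scaleC c (x + y) = scaleC c x + scaleC c y"
    and scaleC_add_left: "scaleC (b + c) x = scaleC b x + scaleC c x"
    and scaleC_scaleC: "scaleC b (scaleC c x) = scaleC (b * c) x"
    and scaleC_one: "scaleC 1 x = x"
    and scaleR_scaleC: "scaleR r x = scaleC (complex_of_real r) x"

class complex_inner = complex_vector + real_normed_vector +
  fixes cinner :: "'a \<Rightarrow> 'a \<Rightarrow> complex"
  assumes cinner_commute: "cinner x y = cnj (cinner y x)"
    and cinner_add_left: "cinner (x + y) z = cinner x z + cinner y z"
    and cinner_scaleC_left: "cinner (scaleC c x) y = c * cinner x y"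
    and cinner_nonneg: "0 \<le> Re (cinner x x)"
    and cinner_eq_zero_iff: "cinner x x = 0 \<longleftrightarrow> x = 0"
    and norm_eq_sqrt_cinner: "norm x = sqrt (Re (cinner x x))"

class chilbert = complex_inner + complete_space

definition clinear :: "('a::complex_vector \<Rightarrow> 'b::complex_vector) \<Rightarrow> bool" where
  "clinear f \<longleftrightarrow> (\<forall>x y. f (x + y) = f x + f y) \<and> (\<forall>c x. f (scaleC c x) = scaleC c (f x))"

definition bounded_clinear :: "('a::complex_inner \<Rightarrow> 'b::complex_inner) \<Rightarrow> bool" where
  "bounded_clinear f \<longleftrightarrow> clinear f \<and> (\<exists>K. \<forall>x. norm (f x) \<le> norm x * K)"

definition badj :: "('a::complex_inner \<Rightarrow> 'b::complex_inner) \<Rightarrow> 'b \<Rightarrow> 'a" where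
  "badj f y = (THE z. \<forall>x. cinner (f x) y = cinner x z)"

definition coercive :: "('a::complex_inner \<Rightarrow> 'a) \<Rightarrow> bool" where
  "coercive a \<longleftrightarrow> (\<exists>\<mu>>0. \<forall>x. Re (cinner (a x) x) \<ge> \<mu> * (norm x)\<^sup>2)"

section \<open>Unbounded operators, given by a domain and a function\<close>

definition csubspace :: "'a::complex_vector set \<Rightarrow> bool" where
  "csubspace S \<longleftrightarrow> 0 \<in> S \<and> (\<forall>x\<in>S. \<forall>y\<in>S. x + y \<in> S) \<and> (\<forall>c. \<forall>x\<in>S. scaleC c x \<in> S)"

definition lin_op :: "'a::complex_vector set \<Rightarrow> ('a \<Rightarrow> 'b::complex_vector) \<Rightarrow> bool" where
  "lin_op S f \<longleftrightarrow> csubspace S \<and> (\<forall>x\<in>S. \<forall>y\<in>S. f (x + y) = f x + f y)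
     \<and> (\<forall>c. \<forall>x\<in>S. f (scaleC c x) = scaleC c (f x))"

definition op_graph :: "'a set \<Rightarrow> ('a \<Rightarrow> 'b) \<Rightarrow> ('a \<times> 'b) set" where
  "op_graph S f = (\<lambda>x. (x, f x)) ` S"

definition closed_op :: "'a::real_normed_vector set \<Rightarrow> ('a \<Rightarrow> 'b::real_normed_vector) \<Rightarrow> bool" where
  "closed_op S f \<longleftrightarrow> closed (op_graph S f)"

definition densely_defined :: "'a::topological_space set \<Rightarrow> bool" where
  "densely_defined S \<longleftrightarrow> closure S = UNIV"

definition adj_dom :: "'a::complex_inner set \<Rightarrow> ('a \<Rightarrow> 'b::complex_inner) \<Rightarrow> 'b set" where
  "adj_dom S f = {y. \<exists>z. \<forall>x\<in>S. cinner (f x) y = cinner x z}"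

definition adj_op :: "'a::complex_inner set \<Rightarrow> ('a \<Rightarrow> 'b::complex_inner) \<Rightarrow> 'b \<Rightarrow> 'a" where
  "adj_op S f y = (THE z. \<forall>x\<in>S. cinner (f x) y = cinner x z)"

definition ginner :: "('a::complex_inner \<Rightarrow> 'b::complex_inner) \<Rightarrow> 'a \<Rightarrow> 'a \<Rightarrow> complex" where
  "ginner f u v = cinner u v + cinner (f u) (f v)"

definition bd :: "'a::complex_inner set \<Rightarrow> ('a \<Rightarrow> 'b::complex_inner) \<Rightarrow> 'a set \<Rightarrow> 'a set" where
  "bd S f R = {u \<in> S. \<forall>v\<in>R. ginner f u v = 0}"

definition bd_proj :: "'a::complex_inner set \<Rightarrow> ('a \<Rightarrow> 'b::complex_inner) \<Rightarrow> 'a \<Rightarrow> 'a" where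
  "bd_proj B f u = (THE w. w \<in> B \<and> (\<forall>v\<in>B. ginner f (u - w) v = 0))"

end

(*
  The inclusion from left to right is a computation with the pairing Phi: it vanishes on
  dom(D0) x dom(G) and on dom(D) x dom(G0), so Phi(pi a*Gv)(pi u) = Phi(a*Gv)(u), which is the
  conjugate of (aGu, Gv) + (mu, v) and vanishes when DaGu = mu and v is in dom(G0).

  Conversely, given a boundary value u0 one looks for u = u0 + w with w in dom(G0) solving the
  weak equation (aGu, Gx) + (mu, x) = 0 for all x in dom(G0); since D is closed, D = D**
  turns a weak solution into a strong one. In the graph inner product of dom(G0) this reads
  T w = -f for the Riesz representative f of the form at u0. As ran(T) is closed, -f lies
  in it iff it is orthogonal to every k orthogonal to ran(T), and such k are exactly the
  elements of ker(m* - Da*G0), on which the hypothesis gives the orthogonality.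
*)

theory Submission
  imports Defs
begin

lemma scaleC_zero_left [simp]: "scaleC 0 (x::'a::complex_vector) = 0"
  using scaleR_scaleC[of 0 x] by simp

lemma scaleC_minus1: "scaleC (-1) (x::'a::complex_vector) = - x"
  using scaleR_scaleC[of "-1" x] by simp

lemma cinner_add_right: "cinner x (y + z) = cinner x y + cinner (x::'a::complex_inner) z"
  by (metis cinner_add_left cinner_commute complex_cnj_add)

lemma cinner_scaleC_right: "cinner x (scaleC c y) = cnj c * cinner (x::'a::complex_inner) y"
  by (metis cinner_commute cinner_scaleC_left complex_cnj_cnj complex_cnj_mult)

lemma cinner_zero_left [simp]: "cinner 0 (x::'a::complex_inner) = 0"
  using cinner_scaleC_left[of 0 0 x] by simp

lemma cinner_zero_right [simp]: "cinner (x::'a::complex_inner) 0 = 0"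
  using cinner_scaleC_right[of x 0 0] by simp

lemma cinner_minus_left: "cinner (- x) (y::'a::complex_inner) = - cinner x y"
  using cinner_scaleC_left[of "-1" x y] by (simp add: scaleC_minus1)

lemma cinner_minus_right: "cinner x (- y::'a::complex_inner) = - cinner x y"
  using cinner_scaleC_right[of x "-1" y] by (simp add: scaleC_minus1)

lemma cinner_diff_left: "cinner (x - y) (z::'a::complex_inner) = cinner x z - cinner y z"
  using cinner_add_left[of x "-y" z] by (simp add: cinner_minus_left)

lemma cinner_diff_right: "cinner x (y - z::'a::complex_inner) = cinner x y - cinner x z"
  using cinner_add_right[of x y "-z"] by (simp add: cinner_minus_right)

lemma cinner_self: "cinner x (x::'a::complex_inner) = complex_of_real ((norm x)\<^sup>2)"
proof -
  have "Im (cinner x x) = 0" using cinner_commute[of x x] by (metis cnj.sel(2) neg_equal_zero)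
  moreover have "Re (cinner x x) = (norm x)\<^sup>2" by (simp add: norm_eq_sqrt_cinner cinner_nonneg)
  ultimately show ?thesis by (simp add: complex_eq_iff)
qed

lemma power2_norm_diff_projection:
  fixes y m :: "'a::complex_inner"
  assumes "m \<noteq> 0"
  shows "(norm (y - scaleC (cinner y m / complex_of_real ((norm m)\<^sup>2)) m))\<^sup>2
       = (norm y)\<^sup>2 - (cmod (cinner y m))\<^sup>2 / (norm m)\<^sup>2"
proof -
  define c where "c = cinner y m"
  define n where "n = (norm m)\<^sup>2"
  define t where "t = c / complex_of_real n"
  have n: "complex_of_real n \<noteq> 0" using assms by (simp add: n_def)
  have orth: "cinner (y - scaleC t m) m = 0"
    using n by (simp add: cinner_diff_left cinner_scaleC_left cinner_self t_def c_def n_def)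
  have "cinner (y - scaleC t m) (y - scaleC t m) = cinner (y - scaleC t m) y"
    using orth by (simp add: cinner_diff_right cinner_scaleC_right)
  also have "\<dots> = cinner y y - c * cnj c / complex_of_real n"
    by (simp add: cinner_diff_left cinner_scaleC_left t_def c_def cinner_commute[of m y])
  also have "\<dots> = complex_of_real ((norm y)\<^sup>2 - (cmod c)\<^sup>2 / n)"
    by (simp add: cinner_self complex_norm_square[symmetric])
  finally show ?thesis
    unfolding cinner_self of_real_eq_iff t_def c_def n_def .
qed

lemma cauchy_schwarz: "norm (cinner x y) \<le> norm x * norm (y::'a::complex_inner)"
proof (cases "y = 0")
  case False
  have "0 \<le> (norm x)\<^sup>2 - (cmod (cinner x y))\<^sup>2 / (norm y)\<^sup>2"
    using power2_norm_diff_projection[OF False, of x] by (metis zero_le_power2)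
  then have "(cmod (cinner x y))\<^sup>2 \<le> (norm x * norm y)\<^sup>2"
    using False by (simp add: divide_simps power_mult_distrib mult.commute)
  then show ?thesis by (rule power2_le_imp_le) simp
qed simp

lemma bounded_bilinear_cinner: "bounded_bilinear (cinner :: 'a::complex_inner \<Rightarrow> 'a \<Rightarrow> complex)"
proof
  fix a a' b b' :: 'a and r :: real
  show "cinner (a + a') b = cinner a b + cinner a' b" by (rule cinner_add_left)
  show "cinner a (b + b') = cinner a b + cinner a b'" by (rule cinner_add_right)
  show "cinner (scaleR r a) b = scaleR r (cinner a b)"
    by (simp add: scaleR_scaleC cinner_scaleC_left scaleR_conv_of_real)
  show "cinner a (scaleR r b) = scaleR r (cinner a b)"
    by (simp add: scaleR_scaleC cinner_scaleC_right scaleR_conv_of_real)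
  show "\<exists>K. \<forall>a b::'a. norm (cinner a b) \<le> norm a * norm b * K"
    by (rule exI[of _ 1]) (simp add: cauchy_schwarz)
qed

lemmas continuous_on_cinner = bounded_bilinear.continuous_on[OF bounded_bilinear_cinner]

lemma parallelogram_midpoint:
  fixes x s t :: "'a::complex_inner"
  shows "(norm (s - t))\<^sup>2
       = 2 * (norm (x - s))\<^sup>2 + 2 * (norm (x - t))\<^sup>2 - 4 * (norm (x - scaleR (1/2) (s + t)))\<^sup>2"
proof -
  have mid: "x - scaleR (1/2) (s + t) = scaleR (1/2) ((x - s) + (x - t))"
    by (simp add: algebra_simps scaleR_2[symmetric])
  have "cinner (s - t) (s - t) + cinner ((x - s) + (x - t)) ((x - s) + (x - t))
      = 2 * cinner (x - s) (x - s) + 2 * cinner (x - t) (x - t)"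
    by (simp add: cinner_add_left cinner_add_right cinner_diff_left cinner_diff_right algebra_simps)
  then have "(norm (s - t))\<^sup>2 + (norm ((x - s) + (x - t)))\<^sup>2
      = 2 * (norm (x - s))\<^sup>2 + 2 * (norm (x - t))\<^sup>2"
    by (metis (no_types) Re_complex_of_real cinner_self of_real_add of_real_mult of_real_numeral)
  then show ?thesis unfolding mid by (simp add: power_divide)
qed

instantiation prod :: (complex_vector, complex_vector) complex_vector
begin
definition scaleC_prod_def: "scaleC c x = (scaleC c (fst x), scaleC c (snd x))"
instance
  by standard (simp_all add: scaleC_prod_def scaleR_prod_def scaleC_add_right scaleC_add_left
      scaleC_scaleC scaleC_one scaleR_scaleC)
end

instantiation prod :: (complex_inner, complex_inner) complex_inner
begin
definition cinner_prod_def: "cinner x y = cinner (fst x) (fst y) + cinner (snd x) (snd y)"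
instance
proof
  fix x y z :: "'a \<times> 'b" and c :: complex
  show "cinner x y = cnj (cinner y x)"
    by (simp add: cinner_prod_def cinner_commute[of "fst x"] cinner_commute[of "snd x"])
  show "cinner (x + y) z = cinner x z + cinner y z"
    by (simp add: cinner_prod_def cinner_add_left)
  show "cinner (scaleC c x) y = c * cinner x y"
    by (simp add: cinner_prod_def scaleC_prod_def cinner_scaleC_left algebra_simps)
  have sq: "cinner x x = complex_of_real ((norm (fst x))\<^sup>2 + (norm (snd x))\<^sup>2)"
    by (simp add: cinner_prod_def cinner_self)
  show "0 \<le> Re (cinner x x)" by (simp add: sq)
  show "cinner x x = 0 \<longleftrightarrow> x = 0"
    unfolding sq of_real_eq_0_iff by (simp add: add_nonneg_eq_0_iff prod_eq_iff)
  show "norm x = sqrt (Re (cinner x x))" by (simp add: sq norm_prod_def)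
qed
end

instance prod :: (chilbert, chilbert) chilbert ..

lemma cinner_Pair [simp]: "cinner (a, b) (c, d) = cinner a c + cinner b d"
  by (simp add: cinner_prod_def)

lemma csubspace_0: "csubspace S \<Longrightarrow> 0 \<in> S"
  by (simp add: csubspace_def)

lemma csubspace_add: "csubspace S \<Longrightarrow> x \<in> S \<Longrightarrow> y \<in> S \<Longrightarrow> x + y \<in> S"
  by (simp add: csubspace_def)

lemma csubspace_scaleC: "csubspace S \<Longrightarrow> x \<in> S \<Longrightarrow> scaleC c x \<in> S"
  by (simp add: csubspace_def)

lemma csubspace_minus: "csubspace S \<Longrightarrow> x \<in> S \<Longrightarrow> - x \<in> S"
  using csubspace_scaleC[of S x "-1"] by (simp add: scaleC_minus1)

lemma csubspace_diff: "csubspace S \<Longrightarrow> x \<in> S \<Longrightarrow> y \<in> S \<Longrightarrow> x - y \<in> S"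
  using csubspace_add[of S x "- y"] csubspace_minus[of S y] by simp

lemma csubspace_scaleR: "csubspace S \<Longrightarrow> x \<in> S \<Longrightarrow> scaleR r x \<in> S"
  by (simp add: scaleR_scaleC csubspace_scaleC)

section \<open>Orthogonal projection and Riesz representation\<close>

lemma nearest_point_exists:
  fixes M :: "'a::chilbert set"
  assumes M: "csubspace M" "closed M"
  shows "\<exists>p\<in>M. \<forall>q\<in>M. norm (x - p) \<le> norm (x - q)"
proof -
  define d where "d = (INF q\<in>M. (norm (x - q))\<^sup>2)"
  have bdd: "bdd_below ((\<lambda>q. (norm (x - q))\<^sup>2) ` M)" by (rule bdd_belowI[of _ 0]) auto
  have d_le: "d \<le> (norm (x - q))\<^sup>2" if "q \<in> M" for q
    unfolding d_def using bdd that by (rule cINF_lower)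
  have "\<exists>q\<in>M. (norm (x - q))\<^sup>2 < d + inverse (real (Suc n))" for n
    unfolding d_def using csubspace_0[OF M(1)]
    by (intro cINF_less_iff[THEN iffD1] bdd) auto
  then obtain s where sM: "\<And>n. s n \<in> M"
    and s_close: "\<And>n. (norm (x - s n))\<^sup>2 < d + inverse (real (Suc n))"
    by metis
  have s_diff: "(norm (s i - s j))\<^sup>2 < 2 * inverse (real (Suc i)) + 2 * inverse (real (Suc j))" for i j
  proof -
    have "scaleR (1/2) (s i + s j) \<in> M"
      using sM M(1) by (simp add: csubspace_add csubspace_scaleR)
    then have "d \<le> (norm (x - scaleR (1/2) (s i + s j)))\<^sup>2" by (rule d_le)
    then show ?thesis
      using parallelogram_midpoint[of "s i" "s j" x] s_close[of i] s_close[of j] by linarith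
  qed
  have "Cauchy s"
  proof (rule metric_CauchyI)
    fix e :: real assume e: "e > 0"
    obtain N where N: "inverse (real (Suc N)) < e\<^sup>2 / 4"
      using reals_Archimedean[of "e\<^sup>2 / 4"] e by auto
    have "dist (s i) (s j) < e" if "N \<le> i" "N \<le> j" for i j
    proof -
      have "inverse (real (Suc i)) \<le> inverse (real (Suc N))"
           "inverse (real (Suc j)) \<le> inverse (real (Suc N))"
        using that by (auto intro!: le_imp_inverse_le)
      then have "(norm (s i - s j))\<^sup>2 < e\<^sup>2" using s_diff[of i j] N by linarith
      then show ?thesis using e by (simp add: dist_norm power_less_imp_less_base)
    qed
    then show "\<exists>M. \<forall>m\<ge>M. \<forall>n\<ge>M. dist (s m) (s n) < e" by blast
  qed
  then obtain p where lim: "s \<longlonglongrightarrow> p" using Cauchy_convergent_iff convergent_def by blast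
  have pM: "p \<in> M" using closed_sequentially[OF M(2) sM lim] .
  have "(\<lambda>n. (norm (x - s n))\<^sup>2) \<longlonglongrightarrow> (norm (x - p))\<^sup>2"
    by (intro tendsto_intros lim)
  moreover have "(\<lambda>n. d + inverse (real (Suc n))) \<longlonglongrightarrow> d"
    using tendsto_add[OF tendsto_const LIMSEQ_inverse_real_of_nat, of d] by simp
  ultimately have "(norm (x - p))\<^sup>2 \<le> d"
    using s_close by (intro LIMSEQ_le) (auto intro: less_imp_le)
  then have "(norm (x - p))\<^sup>2 \<le> (norm (x - q))\<^sup>2" if "q \<in> M" for q
    using d_le[OF that] by linarith
  then show ?thesis using pM by (meson norm_ge_zero power2_le_imp_le)
qed

lemma nearest_point_orthogonal:
  fixes M :: "'a::complex_inner set"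
  assumes M: "csubspace M" and p: "p \<in> M" and nearest: "\<forall>q\<in>M. norm (x - p) \<le> norm (x - q)"
    and m: "m \<in> M"
  shows "cinner (x - p) m = 0"
proof (cases "m = 0")
  case False
  define t where "t = cinner (x - p) m / complex_of_real ((norm m)\<^sup>2)"
  have "p + scaleC t m \<in> M" using M p m by (simp add: csubspace_add csubspace_scaleC)
  then have "(norm (x - p))\<^sup>2 \<le> (norm (x - p - scaleC t m))\<^sup>2"
    using nearest by (metis diff_diff_eq norm_ge_zero power_mono)
  also have "\<dots> = (norm (x - p))\<^sup>2 - (cmod (cinner (x - p) m))\<^sup>2 / (norm m)\<^sup>2"
    unfolding t_def by (rule power2_norm_diff_projection[OF False])
  finally have "(cmod (cinner (x - p) m))\<^sup>2 / (norm m)\<^sup>2 \<le> 0" by simp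
  then show ?thesis using False by (simp add: divide_le_0_iff)
qed simp

lemma orthogonal_projection_exists:
  fixes M :: "'a::chilbert set"
  assumes "csubspace M" "closed M"
  shows "\<exists>p\<in>M. \<forall>m\<in>M. cinner (x - p) m = 0"
  using nearest_point_exists[OF assms] nearest_point_orthogonal[OF assms(1)] by blast

lemma orthogonal_dense_eq_0:
  fixes w :: "'a::complex_inner"
  assumes "densely_defined S" and "\<forall>x\<in>S. cinner x w = 0"
  shows "w = 0"
proof -
  have "closed {x. cinner x w = 0}"
    by (intro closed_Collect_eq continuous_on_cinner continuous_on_id continuous_on_const)
  then have "closure S \<subseteq> {x. cinner x w = 0}"
    using assms(2) by (intro closure_minimal) auto
  then have "cinner w w = 0" using assms(1) by (auto simp: densely_defined_def)
  then show ?thesis by (simp add: cinner_eq_zero_iff)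
qed

lemma cinner_dense_right_unique:
  fixes z z' :: "'a::complex_inner"
  assumes "densely_defined S" and "\<forall>x\<in>S. cinner x z = cinner x z'"
  shows "z = z'"
  using orthogonal_dense_eq_0[OF assms(1), of "z - z'"] assms(2) by (simp add: cinner_diff_right)

lemma riesz_representation:
  fixes \<phi> :: "'a::chilbert \<Rightarrow> complex"
  assumes add: "\<And>x y. \<phi> (x + y) = \<phi> x + \<phi> y"
    and scale: "\<And>c x. \<phi> (scaleC c x) = c * \<phi> x"
    and cont: "continuous_on UNIV \<phi>"
  shows "\<exists>z. \<forall>x. \<phi> x = cinner x z"
proof (cases "\<forall>x. \<phi> x = 0")
  case False
  then obtain x0 where x0: "\<phi> x0 \<noteq> 0" by blast
  define N where "N = {x. \<phi> x = 0}"
  have \<phi>0: "\<phi> 0 = 0" using scale[of 0 0] by simp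
  have \<phi>_diff: "\<phi> (x - y) = \<phi> x - \<phi> y" for x y
    by (metis add add_diff_cancel diff_add_cancel)
  have "csubspace N" unfolding N_def csubspace_def using add scale \<phi>0 by auto
  moreover have "closed N" unfolding N_def by (intro closed_Collect_eq cont continuous_on_const)
  ultimately obtain p where pN: "p \<in> N" and orth: "\<forall>n\<in>N. cinner (x0 - p) n = 0"
    using orthogonal_projection_exists by blast
  define w where "w = x0 - p"
  have \<phi>w: "\<phi> w = \<phi> x0" using pN by (simp add: w_def \<phi>_diff N_def)
  have nw: "complex_of_real ((norm w)\<^sup>2) \<noteq> 0" using x0 \<phi>w \<phi>0 by auto
  have "\<phi> x = cinner x (scaleC (cnj (\<phi> w) / complex_of_real ((norm w)\<^sup>2)) w)" for x
  proof -
    \<comment> \<open>x is the multiple of w with the same value plus an element of the kernel\<close>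
    have "x - scaleC (\<phi> x / \<phi> w) w \<in> N"
      using \<phi>w x0 by (simp add: N_def \<phi>_diff scale)
    then have "cinner (x - scaleC (\<phi> x / \<phi> w) w) w = 0"
      using orth by (metis w_def cinner_commute complex_cnj_zero)
    then have "cinner x w = \<phi> x / \<phi> w * complex_of_real ((norm w)\<^sup>2)"
      by (simp add: cinner_diff_left cinner_scaleC_left cinner_self)
    then show ?thesis using nw \<phi>w x0 by (simp add: cinner_scaleC_right)
  qed
  then show ?thesis by blast
qed (rule exI[of _ 0], simp)

lemma bounded_clinear_add: "bounded_clinear f \<Longrightarrow> f (x + y) = f x + f y"
  by (simp add: bounded_clinear_def clinear_def)

lemma bounded_clinear_scaleC: "bounded_clinear f \<Longrightarrow> f (scaleC c x) = scaleC c (f x)"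
  by (simp add: bounded_clinear_def clinear_def)

lemma bounded_clinear_imp_bounded_linear:
  assumes "bounded_clinear f"
  shows "bounded_linear f"
proof -
  obtain K where "\<forall>x. norm (f x) \<le> norm x * K" using assms by (auto simp: bounded_clinear_def)
  then show ?thesis
    by (intro bounded_linear_intro[where K=K])
      (use assms in \<open>auto simp: bounded_clinear_add bounded_clinear_scaleC scaleR_scaleC\<close>)
qed

lemma cinner_badj:
  fixes f :: "'a::chilbert \<Rightarrow> 'b::chilbert"
  assumes f: "bounded_clinear f"
  shows "cinner (f x) y = cinner x (badj f y)"
proof -
  have "continuous_on UNIV f"
    by (rule linear_continuous_on[OF bounded_clinear_imp_bounded_linear[OF f]])
  then have "continuous_on UNIV (\<lambda>x. cinner (f x) y)"
    by (intro continuous_on_cinner continuous_on_const)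
  then have "\<exists>z. \<forall>x. cinner (f x) y = cinner x z"
    by (intro riesz_representation)
      (simp_all add: bounded_clinear_add[OF f] bounded_clinear_scaleC[OF f] cinner_add_left
        cinner_scaleC_left)
  then obtain z where z: "\<forall>x. cinner (f x) y = cinner x z" ..
  have "densely_defined (UNIV :: 'a set)" by (simp add: densely_defined_def)
  then have "\<exists>!z. \<forall>x. cinner (f x) y = cinner x z"
    using z cinner_dense_right_unique by (metis UNIV_I)
  then have "\<forall>x. cinner (f x) y = cinner x (badj f y)"
    unfolding badj_def by (rule theI')
  then show ?thesis ..
qed

lemma lin_op_csubspace: "lin_op S f \<Longrightarrow> csubspace S"
  by (simp add: lin_op_def)

lemma lin_op_add: "lin_op S f \<Longrightarrow> x \<in> S \<Longrightarrow> y \<in> S \<Longrightarrow> f (x + y) = f x + f y"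
  by (simp add: lin_op_def)

lemma lin_op_scaleC: "lin_op S f \<Longrightarrow> x \<in> S \<Longrightarrow> f (scaleC c x) = scaleC c (f x)"
  by (simp add: lin_op_def)

lemma lin_op_minus: "lin_op S f \<Longrightarrow> x \<in> S \<Longrightarrow> f (- x) = - f x"
  using lin_op_scaleC[of S f x "-1"] by (simp add: scaleC_minus1)

lemma lin_op_diff: "lin_op S f \<Longrightarrow> x \<in> S \<Longrightarrow> y \<in> S \<Longrightarrow> f (x - y) = f x - f y"
  using lin_op_add[of S f x "- y"] lin_op_minus[of S f y]
  by (simp add: csubspace_minus lin_op_csubspace)

lemma lin_op_subset: "lin_op S f \<Longrightarrow> csubspace R \<Longrightarrow> R \<subseteq> S \<Longrightarrow> lin_op R f"
  by (simp add: lin_op_def subset_iff)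

lemma op_graph_cong: "(\<And>x. x \<in> S \<Longrightarrow> f x = g x) \<Longrightarrow> op_graph S f = op_graph S g"
  by (simp add: op_graph_def)

lemma csubspace_image:
  assumes L: "lin_op S f"
  shows "csubspace (f ` S)"
proof -
  have S: "csubspace S" using L by (rule lin_op_csubspace)
  have "f 0 = 0" using lin_op_scaleC[OF L csubspace_0[OF S], of 0] by simp
  then have "0 \<in> f ` S" using csubspace_0[OF S] by force
  moreover have "f x + f y \<in> f ` S" if "x \<in> S" "y \<in> S" for x y
    using that lin_op_add[OF L that] csubspace_add[OF S] by (metis image_eqI)
  moreover have "scaleC c (f x) \<in> f ` S" if "x \<in> S" for c x
    using that lin_op_scaleC[OF L that] csubspace_scaleC[OF S] by (metis image_eqI)
  ultimately show ?thesis unfolding csubspace_def by blast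
qed

lemma csubspace_op_graph:
  assumes "lin_op S f"
  shows "csubspace (op_graph S f)"
proof -
  have "lin_op S (\<lambda>x. (x, f x))" using assms by (simp add: lin_op_def scaleC_prod_def)
  then show ?thesis unfolding op_graph_def by (rule csubspace_image)
qed

section \<open>Adjoints of unbounded operators\<close>

lemma cinner_adj_op:
  assumes dense: "densely_defined S" and y: "y \<in> adj_dom S f" and x: "x \<in> S"
  shows "cinner (f x) y = cinner x (adj_op S f y)"
proof -
  obtain z where z: "\<forall>x\<in>S. cinner (f x) y = cinner x z" using y by (auto simp: adj_dom_def)
  then have "\<exists>!z. \<forall>x\<in>S. cinner (f x) y = cinner x z"
    using cinner_dense_right_unique[OF dense] by metis
  then have "\<forall>x\<in>S. cinner (f x) y = cinner x (adj_op S f y)"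
    unfolding adj_op_def by (rule theI')
  then show ?thesis using x ..
qed

lemma adj_opI:
  assumes dense: "densely_defined S" and z: "\<forall>x\<in>S. cinner (f x) y = cinner x z"
  shows "y \<in> adj_dom S f" "adj_op S f y = z"
proof -
  show y: "y \<in> adj_dom S f" using z by (auto simp: adj_dom_def)
  show "adj_op S f y = z"
    using cinner_dense_right_unique[OF dense] cinner_adj_op[OF dense y] z by metis
qed

lemma lin_op_adj:
  assumes dense: "densely_defined S"
  shows "lin_op (adj_dom S f) (adj_op S f)"
proof -
  let ?A = "adj_dom S f" and ?f = "adj_op S f"
  have add: "y + y' \<in> ?A \<and> ?f (y + y') = ?f y + ?f y'" if "y \<in> ?A" "y' \<in> ?A" for y y'
    using adj_opI[OF dense, of f "y + y'" "?f y + ?f y'"]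
      cinner_adj_op[OF dense that(1)] cinner_adj_op[OF dense that(2)]
    by (simp add: cinner_add_right)
  have scale: "scaleC c y \<in> ?A \<and> ?f (scaleC c y) = scaleC c (?f y)" if "y \<in> ?A" for y c
    using adj_opI[OF dense, of f "scaleC c y" "scaleC c (?f y)"] cinner_adj_op[OF dense that]
    by (simp add: cinner_scaleC_right)
  have "0 \<in> ?A" using adj_opI(1)[OF dense, of f 0 0] by simp
  then show ?thesis using add scale by (simp add: lin_op_def csubspace_def)
qed

lemma closed_op_graph_minus_adj:
  assumes dense: "densely_defined S"
  shows "closed (op_graph (adj_dom S f) (\<lambda>y. - adj_op S f y))"
proof -
  have "op_graph (adj_dom S f) (\<lambda>y. - adj_op S f y)
      = (\<Inter>x\<in>S. {p. cinner (f x) (fst p) + cinner x (snd p) = 0})" (is "_ = ?I")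
  proof (intro equalityI subsetI)
    fix p assume "p \<in> op_graph (adj_dom S f) (\<lambda>y. - adj_op S f y)"
    then show "p \<in> ?I"
      by (auto simp: op_graph_def cinner_adj_op[OF dense] cinner_minus_right)
  next
    fix p assume "p \<in> ?I"
    then have "\<forall>x\<in>S. cinner (f x) (fst p) = cinner x (- snd p)"
      by (auto simp: cinner_minus_right eq_neg_iff_add_eq_0)
    from adj_opI[OF dense this] show "p \<in> op_graph (adj_dom S f) (\<lambda>y. - adj_op S f y)"
      by (auto simp: op_graph_def image_iff intro!: bexI[of _ "fst p"] prod_eqI)
  qed
  also have "closed ?I"
    by (intro closed_INT ballI closed_Collect_eq continuous_on_add continuous_on_cinner
        continuous_on_const continuous_on_fst continuous_on_snd continuous_on_id)
  finally show ?thesis .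
qed

text \<open>For closed densely defined \<open>f\<close>: \<open>f\<^sup>*\<^sup>* \<subseteq> f\<close>.\<close>

lemma closed_op_adj_adjD:
  fixes f :: "'a::chilbert \<Rightarrow> 'b::chilbert"
  assumes L: "lin_op S f" and dense: "densely_defined S" and cl: "closed_op S f"
    and yz: "\<forall>x\<in>adj_dom S f. cinner (adj_op S f x) y = cinner x z"
  shows "y \<in> S" "f y = z"
proof -
  obtain p where p: "p \<in> op_graph S f" and orth: "\<forall>q\<in>op_graph S f. cinner ((y, z) - p) q = 0"
    using orthogonal_projection_exists[OF csubspace_op_graph[OF L]] cl
    unfolding closed_op_def by blast
  obtain r1 r2 where r: "(y, z) - p = (r1, r2)" by fastforce
  \<comment> \<open>orthogonality to the graph of f says exactly that (r2, -r1) lies in the graph of the adjoint\<close>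
  have "\<forall>x\<in>S. cinner (f x) r2 = cinner x (- r1)"
  proof
    fix x assume "x \<in> S"
    then have "cinner r1 x + cinner r2 (f x) = 0"
      using orth r by (force simp: op_graph_def)
    then show "cinner (f x) r2 = cinner x (- r1)"
      by (metis cinner_commute cinner_minus_right complex_cnj_add complex_cnj_zero
          eq_neg_iff_add_eq_0 add.commute)
  qed
  from adj_opI[OF dense this] yz have "cinner (- r1) y = cinner r2 z" by metis
  then have "cinner ((y, z) - p) (y, z) = 0"
    by (simp add: r cinner_minus_left flip: neg_eq_iff_add_eq_0)
  moreover have "cinner ((y, z) - p) p = 0" using orth p by blast
  ultimately have "cinner ((y, z) - p) ((y, z) - p) = 0" by (simp add: cinner_diff_right)
  then have "(y, z) = p" by (simp add: cinner_eq_zero_iff)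
  then show "y \<in> S" "f y = z" using p by (auto simp: op_graph_def)
qed

lemma ginner_eq_cinner_Pair: "ginner f x y = cinner (x, f x) (y, f y)"
  by (simp add: ginner_def)

lemma ginner_commute: "ginner f x y = cnj (ginner f y x)"
  unfolding ginner_eq_cinner_Pair by (rule cinner_commute)

lemma ginner_self_eq_0: "ginner f x x = 0 \<Longrightarrow> x = 0"
  unfolding ginner_eq_cinner_Pair cinner_eq_zero_iff by (simp add: zero_prod_def)

lemma ginner_add_left:
  "lin_op S f \<Longrightarrow> x \<in> S \<Longrightarrow> y \<in> S \<Longrightarrow> ginner f (x + y) v = ginner f x v + ginner f y v"
  by (simp add: ginner_def lin_op_add cinner_add_left)

lemma ginner_diff_left:
  "lin_op S f \<Longrightarrow> x \<in> S \<Longrightarrow> y \<in> S \<Longrightarrow> ginner f (x - y) v = ginner f x v - ginner f y v"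
  by (simp add: ginner_def lin_op_diff cinner_diff_left)

lemma ginner_minus_left: "lin_op S f \<Longrightarrow> x \<in> S \<Longrightarrow> ginner f (- x) v = - ginner f x v"
  by (simp add: ginner_def lin_op_minus cinner_minus_left)

lemma ginner_scaleC_left:
  "lin_op S f \<Longrightarrow> x \<in> S \<Longrightarrow> ginner f (scaleC c x) v = c * ginner f x v"
  by (simp add: ginner_def lin_op_scaleC cinner_scaleC_left algebra_simps)

lemma ginner_cong:
  "(\<And>x. x \<in> S \<Longrightarrow> f x = g x) \<Longrightarrow> x \<in> S \<Longrightarrow> y \<in> S \<Longrightarrow> ginner f x y = ginner g x y"
  by (simp add: ginner_def)

lemma ginner_left_unique:
  assumes L: "lin_op S f" and "x \<in> S" "y \<in> S" and eq: "\<forall>v\<in>S. ginner f x v = ginner f y v"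
  shows "x = y"
proof -
  have "x - y \<in> S" using assms by (simp add: csubspace_diff lin_op_csubspace)
  then have "ginner f (x - y) (x - y) = 0"
    using eq ginner_diff_left[OF L \<open>x \<in> S\<close> \<open>y \<in> S\<close>] by simp
  then show ?thesis using ginner_self_eq_0 by fastforce
qed

lemma ginner_representation:
  fixes f :: "'a::chilbert \<Rightarrow> 'b::chilbert"
  assumes L: "lin_op S f" and cl: "closed (op_graph S f)"
  shows "\<exists>w\<in>S. \<forall>x\<in>S. cinner y x + cinner z (f x) = ginner f w x"
proof -
  obtain p where p: "p \<in> op_graph S f" and orth: "\<forall>q\<in>op_graph S f. cinner ((y, z) - p) q = 0"
    using orthogonal_projection_exists[OF csubspace_op_graph[OF L] cl] by blast
  obtain w where w: "w \<in> S" "p = (w, f w)" using p by (auto simp: op_graph_def)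
  have "cinner (y, z) (x, f x) = cinner p (x, f x)" if "x \<in> S" for x
    using orth that by (auto simp: op_graph_def cinner_diff_left)
  then show ?thesis using w by (auto simp: ginner_eq_cinner_Pair)
qed

lemma lin_op_if_ginner_representation:
  assumes L: "lin_op S f" and maps: "\<forall>u\<in>S. T u \<in> S"
    and rep: "\<forall>u\<in>S. \<forall>v\<in>S. ginner f (T u) v = B u v"
    and add: "\<And>u u' v. u \<in> S \<Longrightarrow> u' \<in> S \<Longrightarrow> B (u + u') v = B u v + B u' v"
    and scale: "\<And>c u v. u \<in> S \<Longrightarrow> B (scaleC c u) v = c * B u v"
  shows "lin_op S T"
proof -
  have S: "csubspace S" using L by (rule lin_op_csubspace)
  have "T (u + u') = T u + T u'" if "u \<in> S" "u' \<in> S" for u u'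
    using that S maps rep add ginner_add_left[OF L]
    by (intro ginner_left_unique[OF L]) (simp_all add: csubspace_add)
  moreover have "T (scaleC c u) = scaleC c (T u)" if "u \<in> S" for c u
    using that S maps rep scale ginner_scaleC_left[OF L]
    by (intro ginner_left_unique[OF L]) (simp_all add: csubspace_scaleC)
  ultimately show ?thesis using S by (simp add: lin_op_def)
qed

lemma csubspace_bd:
  assumes L: "lin_op S f"
  shows "csubspace (bd S f R)"
proof -
  have S: "csubspace S" using L by (rule lin_op_csubspace)
  have "f 0 = 0" using lin_op_scaleC[OF L csubspace_0[OF S], of 0] by simp
  then have "0 \<in> bd S f R" using csubspace_0[OF S] by (simp add: bd_def ginner_def)
  moreover have "x + y \<in> bd S f R" if "x \<in> bd S f R" "y \<in> bd S f R" for x y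
    using that csubspace_add[OF S] ginner_add_left[OF L] by (auto simp: bd_def)
  moreover have "scaleC c x \<in> bd S f R" if "x \<in> bd S f R" for c x
    using that csubspace_scaleC[OF S] ginner_scaleC_left[OF L] by (auto simp: bd_def)
  ultimately show ?thesis unfolding csubspace_def by blast
qed

lemma bd_proj_eqI:
  assumes L: "lin_op S f" and u: "u \<in> S" and w: "w \<in> bd S f R" and uw: "u - w \<in> R"
  shows "bd_proj (bd S f R) f u = w"
  unfolding bd_proj_def
proof (rule the_equality)
  have "ginner f (u - w) v = 0" if "v \<in> bd S f R" for v
    using that uw ginner_commute[of f "u - w" v] by (auto simp: bd_def)
  then show "w \<in> bd S f R \<and> (\<forall>v\<in>bd S f R. ginner f (u - w) v = 0)" using w by blast
next
  fix w' assume w': "w' \<in> bd S f R \<and> (\<forall>v\<in>bd S f R. ginner f (u - w') v = 0)"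
  have B: "csubspace (bd S f R)" using L by (rule csubspace_bd)
  have S: "w \<in> S" "w' \<in> S" using w w' by (auto simp: bd_def)
  have d: "w - w' \<in> bd S f R" using w w' csubspace_diff[OF B] by blast
  have "ginner f (u - w') (w - w') = 0" using w' d by blast
  moreover have "ginner f (u - w) (w - w') = 0"
    using uw d ginner_commute[of f "u - w"] by (auto simp: bd_def)
  moreover have "u - w' \<in> S" "u - w \<in> S"
    using u S csubspace_diff[OF lin_op_csubspace[OF L]] by auto
  ultimately have "ginner f (w - w') (w - w') = 0"
    using ginner_diff_left[OF L, of "u - w'" "u - w" "w - w'"] by simp
  then show "w' = w" using ginner_self_eq_0 by fastforce
qed

lemma bd_decomposition:
  fixes f :: "'a::chilbert \<Rightarrow> 'b::chilbert"
  assumes L: "lin_op S f" and R: "csubspace R" "R \<subseteq> S" and cl: "closed (op_graph R f)"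
    and u: "u \<in> S"
  shows "\<exists>w\<in>bd S f R. u - w \<in> R"
proof -
  obtain v where v: "v \<in> R" and orth: "\<forall>x\<in>R. ginner f (u - v) x = 0"
  proof -
    obtain p where p: "p \<in> op_graph R f"
      and orth: "\<forall>q\<in>op_graph R f. cinner ((u, f u) - p) q = 0"
      using orthogonal_projection_exists[OF csubspace_op_graph[OF lin_op_subset[OF L R]] cl]
      by blast
    obtain v where "v \<in> R" "p = (v, f v)" using p by (auto simp: op_graph_def)
    with orth R(2) u show thesis
      by (intro that[of v]) (auto simp: op_graph_def ginner_eq_cinner_Pair lin_op_diff[OF L])
  qed
  have "u - v \<in> bd S f R"
    using u v R(2) orth by (auto simp: bd_def csubspace_diff lin_op_csubspace[OF L])
  then show ?thesis using v by force
qed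

lemma bd_proj_mem:
  fixes f :: "'a::chilbert \<Rightarrow> 'b::chilbert"
  assumes L: "lin_op S f" and R: "csubspace R" "R \<subseteq> S" and cl: "closed (op_graph R f)"
    and u: "u \<in> S"
  shows "bd_proj (bd S f R) f u \<in> bd S f R" "u - bd_proj (bd S f R) f u \<in> R"
  using bd_decomposition[OF assms] bd_proj_eqI[OF L u] by auto

text \<open>The closed range theorem, for the graph inner product of \<open>f\<close>.\<close>

lemma mem_range_if_orthogonal_cokernel:
  fixes f :: "'a::chilbert \<Rightarrow> 'b::chilbert"
  assumes L: "lin_op S f" and T: "lin_op S T" "\<forall>u\<in>S. T u \<in> S"
    and cl: "closed (op_graph (T ` S) f)" and g: "g \<in> S"
    and orth: "\<forall>k\<in>S. (\<forall>w\<in>S. ginner f (T w) k = 0) \<longrightarrow> ginner f g k = 0"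
  shows "g \<in> T ` S"
proof -
  obtain k where k: "k \<in> bd S f (T ` S)" and gk: "g - k \<in> T ` S"
    using bd_decomposition[OF L csubspace_image[OF T(1)] _ cl g] T(2) by blast
  have kS: "k \<in> S" using k by (simp add: bd_def)
  have "ginner f r k = 0" if "r \<in> T ` S" for r
    using k that ginner_commute[of f k r] by (auto simp: bd_def)
  then have "ginner f g k = 0" "ginner f (g - k) k = 0" using orth kS gk by auto
  then have "ginner f k k = 0" using ginner_diff_left[OF L g kS] by simp
  then show ?thesis using ginner_self_eq_0 gk by fastforce
qed

section \<open>The Dirichlet-to-Neumann graph\<close>

text \<open>\<open>domG0\<close> and \<open>domD0\<close> are the domains of \<open>G\<^sup>\<circ> = -D\<^sup>*\<close> and \<open>D\<^sup>\<circ> = -G\<^sup>*\<close>,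
  \<open>projG\<close> and \<open>projD\<close> are \<open>\<pi>\<^bsub>BD(G)\<^esub>\<close> and \<open>\<pi>\<^bsub>BD(D)\<^esub>\<close>, and \<open>boundary_pairing q u\<close> is \<open>(\<Phi> q)(u)\<close>.\<close>

locale closed_op_pair =
  fixes G :: "'a::chilbert \<Rightarrow> 'b::chilbert" and domG :: "'a set"
    and D :: "'b \<Rightarrow> 'a" and domD :: "'b set"
  assumes G_op: "lin_op domG G" "densely_defined domG" "closed_op domG G"
    and D_op: "lin_op domD D" "densely_defined domD" "closed_op domD D"
    and minus_adj_G_le_D: "\<forall>y\<in>adj_dom domG G. y \<in> domD \<and> D y = - adj_op domG G y"
begin

abbreviation "domG0 \<equiv> adj_dom domD D"
abbreviation "domD0 \<equiv> adj_dom domG G"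
abbreviation "projG \<equiv> bd_proj (bd domG G domG0) G"
abbreviation "projD \<equiv> bd_proj (bd domD D domD0) D"

definition boundary_pairing :: "'b \<Rightarrow> 'a \<Rightarrow> complex" where
  "boundary_pairing q u = cinner (D q) u + cinner q (G u)"

lemma mem_domD0D: "q \<in> domD0 \<Longrightarrow> q \<in> domD" "q \<in> domD0 \<Longrightarrow> D q = - adj_op domG G q"
  using minus_adj_G_le_D by auto

lemma mem_domG0D:
  assumes u: "u \<in> domG0"
  shows "u \<in> domG" "G u = - adj_op domD D u"
proof -
  have "cinner (adj_op domG G x) u = cinner x (- adj_op domD D u)" if x: "x \<in> domD0" for x
  proof -
    have "cinner (adj_op domG G x) u = - cinner (D x) u"
      using mem_domD0D(2)[OF x] by (simp add: cinner_minus_left)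
    also have "\<dots> = - cinner x (adj_op domD D u)"
      using cinner_adj_op[OF D_op(2) u mem_domD0D(1)[OF x]] by simp
    finally show ?thesis by (simp add: cinner_minus_right)
  qed
  then have "\<forall>x\<in>domD0. cinner (adj_op domG G x) u = cinner x (- adj_op domD D u)" ..
  then show "u \<in> domG" "G u = - adj_op domD D u" by (rule closed_op_adj_adjD[OF G_op])+
qed

lemma domG0_subset: "domG0 \<subseteq> domG"
  using mem_domG0D(1) by blast

lemma domD0_subset: "domD0 \<subseteq> domD"
  using mem_domD0D(1) by blast

lemma csubspace_domG0: "csubspace domG0"
  using lin_op_adj[OF D_op(2)] by (rule lin_op_csubspace)

lemma csubspace_domD0: "csubspace domD0"
  using lin_op_adj[OF G_op(2)] by (rule lin_op_csubspace)

lemma lin_op_domG0: "lin_op domG0 G"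
  using G_op(1) csubspace_domG0 domG0_subset by (rule lin_op_subset)

lemma closed_op_graph_domG0: "closed (op_graph domG0 G)"
proof -
  have "op_graph domG0 G = op_graph domG0 (\<lambda>y. - adj_op domD D y)"
    by (rule op_graph_cong) (rule mem_domG0D(2))
  then show ?thesis using closed_op_graph_minus_adj[OF D_op(2)] by simp
qed

lemma closed_op_graph_domD0: "closed (op_graph domD0 D)"
proof -
  have "op_graph domD0 D = op_graph domD0 (\<lambda>y. - adj_op domG G y)"
    by (rule op_graph_cong) (rule mem_domD0D(2))
  then show ?thesis using closed_op_graph_minus_adj[OF G_op(2)] by simp
qed

lemma projG_mem:
  assumes "u \<in> domG"
  shows "projG u \<in> bd domG G domG0" "u - projG u \<in> domG0"
  using bd_proj_mem[OF G_op(1) csubspace_domG0 domG0_subset closed_op_graph_domG0 assms] by auto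

lemma projD_mem:
  assumes "q \<in> domD"
  shows "projD q \<in> bd domD D domD0" "q - projD q \<in> domD0"
  using bd_proj_mem[OF D_op(1) csubspace_domD0 domD0_subset closed_op_graph_domD0 assms] by auto

lemma boundary_pairing_add_left:
  "q \<in> domD \<Longrightarrow> r \<in> domD \<Longrightarrow> boundary_pairing (q + r) u = boundary_pairing q u + boundary_pairing r u"
  by (simp add: boundary_pairing_def lin_op_add[OF D_op(1)] cinner_add_left)

lemma boundary_pairing_add_right:
  "u \<in> domG \<Longrightarrow> w \<in> domG \<Longrightarrow> boundary_pairing q (u + w) = boundary_pairing q u + boundary_pairing q w"
  by (simp add: boundary_pairing_def lin_op_add[OF G_op(1)] cinner_add_right)

lemma boundary_pairing_domG0: "q \<in> domD \<Longrightarrow> u \<in> domG0 \<Longrightarrow> boundary_pairing q u = 0"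
  by (simp add: boundary_pairing_def cinner_adj_op[OF D_op(2)] mem_domG0D(2) cinner_minus_right)

lemma boundary_pairing_domD0:
  assumes q: "q \<in> domD0" and u: "u \<in> domG"
  shows "boundary_pairing q u = 0"
proof -
  have "cinner q (G u) = cnj (cinner u (adj_op domG G q))"
    using cinner_adj_op[OF G_op(2) q u] by (simp add: cinner_commute[of q])
  also have "\<dots> = - cinner (D q) u"
    using mem_domD0D(2)[OF q] by (simp add: cinner_commute[of u] cinner_minus_left)
  finally show ?thesis by (simp add: boundary_pairing_def)
qed

lemma boundary_pairing_proj:
  assumes q: "q \<in> domD" and u: "u \<in> domG"
  shows "boundary_pairing (projD q) (projG u) = boundary_pairing q u"
proof -
  have pq: "projD q \<in> domD" "q - projD q \<in> domD0" using projD_mem[OF q] by (auto simp: bd_def)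
  have pu: "projG u \<in> domG" "u - projG u \<in> domG0" using projG_mem[OF u] by (auto simp: bd_def)
  have "boundary_pairing q u = boundary_pairing (projD q + (q - projD q)) u" by simp
  also have "\<dots> = boundary_pairing (projD q) u"
    using pq domD0_subset boundary_pairing_domD0[OF pq(2) u]
    by (subst boundary_pairing_add_left) auto
  also have "\<dots> = boundary_pairing (projD q) (projG u + (u - projG u))" by simp
  also have "\<dots> = boundary_pairing (projD q) (projG u)"
    using pu domG0_subset boundary_pairing_domG0[OF pq(1) pu(2)]
    by (subst boundary_pairing_add_right) auto
  finally show ?thesis ..
qed

lemma projG_id: "u \<in> bd domG G domG0 \<Longrightarrow> projG u = u"
  using bd_proj_eqI[OF G_op(1)] csubspace_0[OF lin_op_csubspace[OF lin_op_domG0]]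
  by (auto simp: bd_def)

lemma adj_weak_solution:
  assumes "\<forall>x\<in>domG0. cinner x z + cinner (G x) y = 0"
  shows "y \<in> domD" "D y = z"
proof -
  have "cinner (adj_op domD D x) y = cinner x z" if x: "x \<in> domG0" for x
  proof -
    have "cinner x z = - cinner (G x) y" using assms x by (simp add: eq_neg_iff_add_eq_0)
    then show ?thesis using mem_domG0D(2)[OF x] by (simp add: cinner_minus_left)
  qed
  then have "\<forall>x\<in>domG0. cinner (adj_op domD D x) y = cinner x z" ..
  then show "y \<in> domD" "D y = z" using closed_op_adj_adjD[OF D_op] by blast+
qed

end

text \<open>\<open>dtn_form\<close> is the sesquilinear form of \<open>-DaG + m\<close>, \<open>dtn_graph\<close> is \<open>\<Lambda>\<close> and
  \<open>adj_kernel\<close> is \<open>ker(m\<^sup>* - Da\<^sup>*G\<^sup>\<circ>)\<close>.\<close>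

locale dtn_setting = closed_op_pair +
  fixes m :: "'a \<Rightarrow> 'a" and a :: "'b \<Rightarrow> 'b"
  assumes m: "bounded_clinear m" and a: "bounded_clinear a"
begin

definition dtn_form :: "'a \<Rightarrow> 'a \<Rightarrow> complex" where
  "dtn_form u v = cinner (a (G u)) (G v) + cinner (m u) v"

definition dtn_graph :: "('a \<times> 'b) set" where
  "dtn_graph = {(projG u, projD (a (G u))) | u. u \<in> domG \<and> a (G u) \<in> domD \<and> m u - D (a (G u)) = 0}"

definition adj_kernel :: "'a set" where
  "adj_kernel = {v \<in> domG0. badj a (G v) \<in> domD \<and> badj m v = D (badj a (G v))}"

lemma dtn_form_add_left:
  "u \<in> domG \<Longrightarrow> u' \<in> domG \<Longrightarrow> dtn_form (u + u') v = dtn_form u v + dtn_form u' v"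
  by (simp add: dtn_form_def lin_op_add[OF G_op(1)] bounded_clinear_add[OF a]
      bounded_clinear_add[OF m] cinner_add_left)

lemma dtn_form_scaleC_left: "u \<in> domG \<Longrightarrow> dtn_form (scaleC c u) v = c * dtn_form u v"
  by (simp add: dtn_form_def lin_op_scaleC[OF G_op(1)] bounded_clinear_scaleC[OF a]
      bounded_clinear_scaleC[OF m] cinner_scaleC_left algebra_simps)

lemma dtn_form_eq_boundary_pairing:
  "D (a (G u)) = m u \<Longrightarrow> dtn_form u v = boundary_pairing (a (G u)) v"
  by (simp add: dtn_form_def boundary_pairing_def add.commute)

lemma boundary_pairing_badj:
  "D (badj a (G v)) = badj m v \<Longrightarrow> boundary_pairing (badj a (G v)) u = cnj (dtn_form u v)"
  by (simp add: boundary_pairing_def dtn_form_def cinner_badj[OF a] cinner_badj[OF m]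
      cinner_commute[of _ u] cinner_commute[of _ "G u"] add.commute)

lemma dtn_equation_if_dtn_form_eq_0:
  assumes "\<forall>x\<in>domG0. dtn_form u x = 0"
  shows "a (G u) \<in> domD" "D (a (G u)) = m u"
proof -
  have "cinner x (m u) + cinner (G x) (a (G u)) = cnj (dtn_form u x)" for x
    by (simp add: dtn_form_def cinner_commute[of x] cinner_commute[of "G x"] add.commute)
  then have "\<forall>x\<in>domG0. cinner x (m u) + cinner (G x) (a (G u)) = 0"
    using assms by simp
  then show "a (G u) \<in> domD" "D (a (G u)) = m u" by (rule adj_weak_solution)+
qed

lemma adj_kernel_if_dtn_form_eq_0:
  assumes v: "v \<in> domG0" and "\<forall>x\<in>domG0. dtn_form x v = 0"
  shows "v \<in> adj_kernel"
proof -
  have "\<forall>x\<in>domG0. cinner x (badj m v) + cinner (G x) (badj a (G v)) = 0"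
    using assms(2) by (simp add: dtn_form_def cinner_badj[OF a] cinner_badj[OF m] add.commute)
  then show ?thesis using v adj_weak_solution by (simp add: adj_kernel_def)
qed

lemma boundary_pairing_adj_kernel:
  assumes u: "u \<in> domG" "a (G u) \<in> domD" "D (a (G u)) = m u" and v: "v \<in> adj_kernel"
  shows "boundary_pairing (projD (badj a (G v))) (projG u) = 0"
proof -
  have "boundary_pairing (projD (badj a (G v))) (projG u) = boundary_pairing (badj a (G v)) u"
    using v u(1) by (simp add: adj_kernel_def boundary_pairing_proj)
  also have "\<dots> = cnj (boundary_pairing (a (G u)) v)"
    using v u(3) by (simp add: adj_kernel_def boundary_pairing_badj dtn_form_eq_boundary_pairing)
  also have "\<dots> = 0" using v u(2) by (simp add: adj_kernel_def boundary_pairing_domG0)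
  finally show ?thesis .
qed

lemma dtn_solvable:
  assumes T_maps: "\<forall>u\<in>domG0. T u \<in> domG0"
    and T_form: "\<forall>u\<in>domG0. \<forall>v\<in>domG0. ginner G (T u) v = dtn_form u v"
    and T_ran_closed: "closed (op_graph (T ` domG0) G)"
    and u0: "u0 \<in> domG" and kernel: "\<forall>k\<in>adj_kernel. boundary_pairing (badj a (G k)) u0 = 0"
  shows "\<exists>w\<in>domG0. a (G (u0 + w)) \<in> domD \<and> D (a (G (u0 + w))) = m (u0 + w)"
proof -
  have T_lin: "lin_op domG0 T"
    using lin_op_if_ginner_representation[OF lin_op_domG0 T_maps T_form]
      dtn_form_add_left dtn_form_scaleC_left mem_domG0D(1) by blast
  obtain f where f: "f \<in> domG0" and f_rep: "\<forall>x\<in>domG0. dtn_form u0 x = ginner G f x"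
    using ginner_representation[OF lin_op_domG0 closed_op_graph_domG0, of "m u0" "a (G u0)"]
    by (auto simp: dtn_form_def add.commute)
  have "- f \<in> T ` domG0"
  proof (rule mem_range_if_orthogonal_cokernel[OF lin_op_domG0 T_lin T_maps T_ran_closed])
    show "- f \<in> domG0" using csubspace_domG0 f by (rule csubspace_minus)
    show "\<forall>k\<in>domG0. (\<forall>w\<in>domG0. ginner G (T w) k = 0) \<longrightarrow> ginner G (- f) k = 0"
    proof (intro ballI impI)
      fix k assume k: "k \<in> domG0" and "\<forall>w\<in>domG0. ginner G (T w) k = 0"
      then have "k \<in> adj_kernel" using T_form by (simp add: adj_kernel_if_dtn_form_eq_0)
      then have "cnj (dtn_form u0 k) = 0"
        using kernel boundary_pairing_badj by (simp add: adj_kernel_def)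
      then show "ginner G (- f) k = 0"
        using f_rep k ginner_minus_left[OF lin_op_domG0 f] by simp
    qed
  qed
  then obtain w where w: "w \<in> domG0" "T w = - f" by auto
  have "dtn_form (u0 + w) x = 0" if x: "x \<in> domG0" for x
  proof -
    have "dtn_form (u0 + w) x = dtn_form u0 x + ginner G (T w) x"
      using x w(1) u0 T_form mem_domG0D(1) by (simp add: dtn_form_add_left)
    then show ?thesis using x f_rep w(2) ginner_minus_left[OF lin_op_domG0 f] by simp
  qed
  then show ?thesis using w(1) dtn_equation_if_dtn_form_eq_0 by blast
qed

lemma fst_dtn_graph_eq:
  assumes "\<forall>u\<in>domG0. T u \<in> domG0"
    and "\<forall>u\<in>domG0. \<forall>v\<in>domG0. ginner G (T u) v = dtn_form u v"
    and "closed (op_graph (T ` domG0) G)"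
  shows "fst ` dtn_graph = {u0 \<in> bd domG G domG0.
           \<forall>v\<in>adj_kernel. boundary_pairing (projD (badj a (G v))) u0 = 0}"
proof (intro equalityI subsetI)
  fix u0 assume "u0 \<in> fst ` dtn_graph"
  then obtain u where "u \<in> domG" "a (G u) \<in> domD" "D (a (G u)) = m u" "u0 = projG u"
    by (auto simp: dtn_graph_def)
  then show "u0 \<in> {u0 \<in> bd domG G domG0.
           \<forall>v\<in>adj_kernel. boundary_pairing (projD (badj a (G v))) u0 = 0}"
    using projG_mem(1) boundary_pairing_adj_kernel by blast
next
  fix u0 assume "u0 \<in> {u0 \<in> bd domG G domG0.
           \<forall>v\<in>adj_kernel. boundary_pairing (projD (badj a (G v))) u0 = 0}"
  then have u0: "u0 \<in> bd domG G domG0" "u0 \<in> domG"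
    and hyp: "\<forall>v\<in>adj_kernel. boundary_pairing (projD (badj a (G v))) u0 = 0"
    by (auto simp: bd_def)
  have "\<forall>k\<in>adj_kernel. boundary_pairing (badj a (G k)) u0 = 0"
    using hyp boundary_pairing_proj[OF _ u0(2)] projG_id[OF u0(1)] by (simp add: adj_kernel_def)
  then obtain w where w: "w \<in> domG0" "a (G (u0 + w)) \<in> domD" "D (a (G (u0 + w))) = m (u0 + w)"
    using dtn_solvable[OF assms u0(2)] by blast
  have "u0 + w \<in> domG" using u0(2) w(1) mem_domG0D(1) lin_op_csubspace[OF G_op(1)]
    by (simp add: csubspace_add)
  moreover have "projG (u0 + w) = u0"
    using bd_proj_eqI[OF G_op(1) \<open>u0 + w \<in> domG\<close> u0(1)] w(1) by simp
  ultimately show "u0 \<in> fst ` dtn_graph"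
    using w unfolding dtn_graph_def
    by (intro image_eqI[of _ fst "(u0, projD (a (G (u0 + w))))"]) (auto intro!: exI[of _ "u0 + w"])
qed

end

theorem corollary5p4:
  fixes G :: "'a::chilbert \<Rightarrow> 'b::chilbert" and domG :: "'a set"
    and D :: "'b \<Rightarrow> 'a" and domD :: "'b set"
    and m :: "'a \<Rightarrow> 'a" and a :: "'b \<Rightarrow> 'b" and T :: "'a \<Rightarrow> 'a"
  assumes G_op: "lin_op domG G" "densely_defined domG" "closed_op domG G"
    and D_op: "lin_op domD D" "densely_defined domD" "closed_op domD D"
    and GD: "\<forall>y\<in>adj_dom domG G. y \<in> domD \<and> D y = - adj_op domG G y"
    and m: "bounded_clinear m"
    and a: "bounded_clinear a" "coercive a"
    and T_maps: "\<forall>u\<in>adj_dom domD D. T u \<in> adj_dom domD D"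
    and T_def: "\<forall>u\<in>adj_dom domD D. \<forall>v\<in>adj_dom domD D.
                  ginner (\<lambda>x. - adj_op domD D x) (T u) v
                    = cinner (a (G u)) (G v) + cinner (m u) v"
    and T_ran_closed: "closed (op_graph (T ` adj_dom domD D) (\<lambda>x. - adj_op domD D x))"
  shows "fst ` {(bd_proj (bd domG G (adj_dom domD D)) G u,
                 bd_proj (bd domD D (adj_dom domG G)) D (a (G u))) | u.
               u \<in> domG \<and> a (G u) \<in> domD \<and> m u - D (a (G u)) = 0}
       = {u0 \<in> bd domG G (adj_dom domD D).
            \<forall>v\<in>{v \<in> adj_dom domD D. badj a (- adj_op domD D v) \<in> domD
                    \<and> badj m v = D (badj a (- adj_op domD D v))}.
              cinner (D (bd_proj (bd domD D (adj_dom domG G)) D (badj a (G v)))) u0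
              + cinner (bd_proj (bd domD D (adj_dom domG G)) D (badj a (G v))) (G u0) = 0}"
proof -
  interpret dtn_setting G domG D domD m a
    by unfold_locales (simp_all add: G_op D_op GD m a)
  have T_form: "\<forall>u\<in>domG0. \<forall>v\<in>domG0. ginner G (T u) v = dtn_form u v"
    using T_def T_maps ginner_cong[of domG0 "\<lambda>x. - adj_op domD D x" G] mem_domG0D(2)
    by (simp add: dtn_form_def)
  have "op_graph (T ` domG0) G = op_graph (T ` domG0) (\<lambda>x. - adj_op domD D x)"
    using T_maps mem_domG0D(2) by (intro op_graph_cong) auto
  then have T_ran: "closed (op_graph (T ` domG0) G)" using T_ran_closed by simp
  have kernel: "{v \<in> domG0. badj a (- adj_op domD D v) \<in> domD
                  \<and> badj m v = D (badj a (- adj_op domD D v))} = adj_kernel"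
    using mem_domG0D(2) by (auto simp: adj_kernel_def)
  show ?thesis
    unfolding kernel using fst_dtn_graph_eq[OF T_maps T_form T_ran]
    by (simp add: dtn_graph_def boundary_pairing_def)
qed

end
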